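(* Let $0<A<B$ and $h(t)=t\left(\frac{15-10t+3t^2}{8}\right)^2$. For $x>0$ define $$\rho(x)=\frac{\min\{h(t):t\in[A/x,B/x]\}}{\max\{h(t):t\in[A/x,B/x]\}} .$$ Then $\rho$ attains its maximum over $x\in(0,\infty)$ at $$x=\frac{3}{10}(A+B)+\frac25\sqrt{\tfrac12(A^2+B^2)+\tfrac1{16}(B-A)^2}.$$
   Context: Interpretation: if a Gabor frame operator $S$ has spectrum $[A,B]$ and is rescaled to $S/x$, one step of the iteration $\gamma\mapsto\frac{15}{8}\gamma-\frac54S_\gamma\gamma+\frac38S_\gamma^2\gamma$ (with $S_\gamma$ the frame operator of $(\gamma,a,b)$) maps the spectrum via $h$, and $\rho(x)$ is the resulting ratio of smallest to largest frame bound. *)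

theory Defs
  imports Complex_Main
begin

definition h_fun :: "real \<Rightarrow> real" where
  "h_fun t = t * ((15 - 10 * t + 3 * t^2) / 8)^2"

text \<open>rho A B x = min of h over [A/x, B/x] divided by max of h over the same interval
  (min/max of a continuous function on a compact interval, written as Inf/Sup of the image).\<close>
definition rho :: "real \<Rightarrow> real \<Rightarrow> real \<Rightarrow> real" where
  "rho A B x = Inf (h_fun ` {A/x..B/x}) / Sup (h_fun ` {A/x..B/x})"

end

theory Submission
  imports Defs
begin

text \<open>Write \<open>h t = t q(t)\<^sup>2 / 64\<close> with \<open>q t = 15 - 10 t + 3 t\<^sup>2 > 0\<close>. Since
  \<open>h' t = 15 q(t) (1 - t)\<^sup>2 / 64 \<ge> 0\<close>, \<open>h\<close> is nondecreasing, so with \<open>s = 1/x\<close>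
  \<open>\<rho>(x) = h(A s) / h(B s) = (A/B) (q(A s) / q(B s))\<^sup>2\<close>. For fixed \<open>t\<close>, the difference
  \<open>q(A t) q(B s) - q(A s) q(B t)\<close> is a quadratic polynomial in \<open>s - t\<close> without constant term.
  Its linear coefficient vanishes iff \<open>1/t\<close> is a root of \<open>5 x\<^sup>2 - 3 (A + B) x + A B\<close>, and its
  quadratic coefficient is then \<open>15 (B - A) (10/t - 3 (A + B))\<close>, which is nonnegative for the
  larger root, the \<open>x\<^sub>0\<close> of the statement.\<close>

definition h_poly :: "real \<Rightarrow> real" where
  "h_poly t = 15 - 10 * t + 3 * t^2"

lemma h_poly_pos: "h_poly t > 0"
proof -
  have "h_poly t = 3 * (t - 5/3)^2 + 20/3"
    by (simp add: h_poly_def power2_eq_square algebra_simps)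
  with zero_le_power2[of "t - 5/3"] show ?thesis by linarith
qed

lemma h_fun_eq_h_poly: "h_fun t = t * (h_poly t)^2 / 64"
  by (simp add: h_fun_def h_poly_def power2_eq_square field_simps)

lemma h_fun_mono:
  assumes "s \<le> t"
  shows "h_fun s \<le> h_fun t"
proof (rule DERIV_nonneg_imp_nondecreasing[OF assms])
  fix z
  have "DERIV h_fun z :> 15 * h_poly z * (1 - z)^2 / 64"
    unfolding h_fun_def[abs_def]
    by (auto intro!: derivative_eq_intros simp: h_poly_def power2_eq_square field_simps)
  moreover have "15 * h_poly z * (1 - z)^2 / 64 \<ge> 0"
    using h_poly_pos[of z] by simp
  ultimately show "\<exists>y. DERIV h_fun z :> y \<and> 0 \<le> y" by blast
qed

lemma rho_eq_h_fun_ratio: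
  assumes "A \<le> B" "0 < x"
  shows "rho A B x = h_fun (A/x) / h_fun (B/x)"
proof -
  have le: "A/x \<le> B/x" using assms by (simp add: divide_right_mono)
  have "Inf (h_fun ` {A/x..B/x}) = h_fun (A/x)"
    by (rule cInf_eq_minimum) (use le h_fun_mono in auto)
  moreover have "Sup (h_fun ` {A/x..B/x}) = h_fun (B/x)"
    by (rule cSup_eq_maximum) (use le h_fun_mono in auto)
  ultimately show ?thesis by (simp add: rho_def)
qed

lemma rho_eq_h_poly_ratio:
  assumes "A \<le> B" "0 < x"
  shows "rho A B x = A / B * (h_poly (A/x) / h_poly (B/x))^2"
  using assms h_poly_pos[of "B/x"]
  by (simp add: rho_eq_h_fun_ratio h_fun_eq_h_poly power2_eq_square field_simps)

lemma h_poly_cross_diff: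
  "h_poly (A*t) * h_poly (B*s) - h_poly (A*s) * h_poly (B*t)
    = 15 * (B - A) * (3 * (A + B) - 2 * A * B * t) * (s - t)^2
      - 30 * (B - A) * (A * B * t^2 - 3 * (A + B) * t + 5) * (s - t)"
  unfolding h_poly_def by (simp add: power2_eq_square algebra_simps)

lemma h_poly_cross_le:
  assumes "A \<le> B" "A * B * t^2 - 3 * (A + B) * t + 5 = 0" "2 * A * B * t \<le> 3 * (A + B)"
  shows "h_poly (A*s) * h_poly (B*t) \<le> h_poly (A*t) * h_poly (B*s)"
proof -
  have "0 \<le> 15 * (B - A) * (3 * (A + B) - 2 * A * B * t) * (s - t)^2"
    using assms(1,3) by simp
  then show ?thesis
    using h_poly_cross_diff[of A t B s] assms(2) by simp
qed

lemma rho_le_at_larger_root: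
  assumes "0 < A" "A \<le> B" "0 < x" "0 < y"
    and root: "5 * y^2 - 3 * (A + B) * y + A * B = 0"
    and past_vertex: "3 * (A + B) \<le> 10 * y"
  shows "rho A B x \<le> rho A B y"
proof -
  define t where "t = 1 / y"
  have root_t: "A * B * t^2 - 3 * (A + B) * t + 5 = 0"
  proof -
    have "A * B * t^2 - 3 * (A + B) * t + 5 = (5 * y^2 - 3 * (A + B) * y + A * B) / y^2"
      using \<open>0 < y\<close> by (simp add: t_def field_simps power2_eq_square)
    with root show ?thesis by simp
  qed
  have "2 * A * B * t = 6 * (A + B) - 10 * y"
  proof -
    have "2 * A * B * t = 2 * (3 * (A + B) * y - 5 * y^2) / y"
      using root by (simp add: t_def algebra_simps)
    also have "\<dots> = 6 * (A + B) - 10 * y"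
      using \<open>0 < y\<close> by (simp add: power2_eq_square field_simps)
    finally show ?thesis .
  qed
  with past_vertex have vertex_t: "2 * A * B * t \<le> 3 * (A + B)" by linarith
  have cross: "h_poly (A/x) * h_poly (B/y) \<le> h_poly (A/y) * h_poly (B/x)"
    using h_poly_cross_le[OF \<open>A \<le> B\<close> root_t vertex_t, of "1/x"] by (simp add: t_def)
  have "h_poly (A/x) / h_poly (B/x) \<le> h_poly (A/y) / h_poly (B/y)"
    using cross h_poly_pos[of "B/x"] h_poly_pos[of "B/y"] by (simp add: divide_simps)
  then have "(h_poly (A/x) / h_poly (B/x))^2 \<le> (h_poly (A/y) / h_poly (B/y))^2"
    using h_poly_pos by (intro power_mono) (auto intro: less_imp_le)
  then have "A / B * (h_poly (A/x) / h_poly (B/x))^2 \<le> A / B * (h_poly (A/y) / h_poly (B/y))^2"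
    using assms(1,2) by (intro mult_left_mono) auto
  then show ?thesis
    using assms(2-4) by (simp only: rho_eq_h_poly_ratio)
qed

theorem mainTheorem11:
  fixes A B :: real
  assumes "0 < A" and "A < B"
  defines "x0 \<equiv> 3/10 * (A + B) + 2/5 * sqrt (1/2 * (A^2 + B^2) + 1/16 * (B - A)^2)"
  shows "x0 > 0 \<and> (\<forall>x>0. rho A B x \<le> rho A B x0)"
proof -
  define D where "D = 1/2 * (A^2 + B^2) + 1/16 * (B - A)^2"
  have sqrt_D: "sqrt D \<ge> 0" "(sqrt D)^2 = D"
    by (simp_all add: D_def)
  have x0_eq: "x0 = 3/10 * (A + B) + 2/5 * sqrt D"
    by (simp add: x0_def D_def)
  have past_vertex: "3 * (A + B) \<le> 10 * x0"
    using x0_eq sqrt_D(1) by linarith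
  with assms(1,2) have "x0 > 0" by simp
  have "5 * x0^2 - 3 * (A + B) * x0 + A * B = 4/5 * ((sqrt D)^2 - D)"
    unfolding x0_eq D_def by (simp add: power2_eq_square field_simps)
  then have root: "5 * x0^2 - 3 * (A + B) * x0 + A * B = 0"
    using sqrt_D by simp
  show ?thesis
    using \<open>x0 > 0\<close> rho_le_at_larger_root[OF \<open>0 < A\<close> _ _ \<open>x0 > 0\<close> root past_vertex] \<open>A < B\<close>
    by simp
qed

end
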